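(* Let $G$ be a compact group, $\mathcal{X},\mathcal{Y}$ finite-dimensional real normed vector spaces, $\rho_1:G\to\mathrm{GL}(\mathcal{X})$, $\rho_2:G\to\mathrm{GL}(\mathcal{Y})$ continuous representations, and $p_\omega(\cdot\mid\mathbf{x})$ a fixed $G$ equivariant conditional distribution on $G$. Let $\{f_\theta\}_\theta$ be a family of continuous functions $\mathcal{X}\to\mathcal{Y}$ that is a universal approximator, i.e. for every continuous $\psi:\mathcal{X}\to\mathcal{Y}$, every compact $\mathcal{K}\subseteq\mathcal{X}$ and every $\epsilon>0$ there is $\theta$ with $\sup_{\mathbf{x}\in\mathcal{K}}\|\psi(\mathbf{x})-f_\theta(\mathbf{x})\|\le\epsilon$. Define $\phi_{\theta,\omega}(\mathbf{x})=\mathbb{E}_{g\sim p_\omega(\cdot\mid\mathbf{x})}[\rho_2(g)f_\theta(\rho_1(g)^{-1}\mathbf{x})]$. Then $\{\phi_{\theta,\omega}\}_\theta$ is a universal approximator of $G$ equivariant functions: for every continuous $G$ equivariant $\psi:\mathcal{X}\to\mathcal{Y}$ (i.e. $\psi(\rho_1(g)\mathbf{x})=\rho_2(g)\psi(\mathbf{x})$ for all $g,\mathbf{x}$), every compact $\mathcal{K}\subseteq\mathcal{X}$ and every $\epsilon>0$, there exists $\theta$ with $\sup_{\mathbf{x}\in\mathcal{K}}\|\psi(\mathbf{x})-\phi_{\theta,\omega}(\mathbf{x})\|\le\epsilon$.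
   Context: A conditional distribution on $G$ is a family $\{p_\omega(\cdot\mid\mathbf{x})\}_{\mathbf{x}\in\mathcal{X}}$ of Borel probability measures on $G$. It is called $G$ equivariant if for all $\mathbf{x}\in\mathcal{X}$ and $g'\in G$, the pushforward of $p_\omega(\cdot\mid\mathbf{x})$ under left multiplication $g\mapsto g'g$ equals $p_\omega(\cdot\mid\rho_1(g')\mathbf{x})$ (for densities: $p_\omega(g\mid\mathbf{x})=p_\omega(g'g\mid\rho_1(g')\mathbf{x})$ for all $\mathbf{x},g,g'$). *)

theory Defs
  imports "HOL-Probability.Probability" "HOL-Algebra.Group"
begin

definition fin_dim_space :: "'a::real_vector itself \<Rightarrow> bool" where
  "fin_dim_space _ \<longleftrightarrow> (\<exists>B::'a set. finite B \<and> span B = UNIV)"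

definition compact_group :: "('g::t2_space) monoid \<Rightarrow> bool" where
  "compact_group G \<longleftrightarrow> group G \<and> carrier G = UNIV \<and> compact (UNIV :: 'g set) \<and>
     continuous_on UNIV (\<lambda>p::'g \<times> 'g. fst p \<otimes>\<^bsub>G\<^esub> snd p) \<and>
     continuous_on UNIV (\<lambda>g::'g. inv\<^bsub>G\<^esub> g)"

definition continuous_rep :: "'g monoid \<Rightarrow> ('g::topological_space \<Rightarrow> ('x::real_normed_vector \<Rightarrow>\<^sub>L 'x)) \<Rightarrow> bool" where
  "continuous_rep G \<rho> \<longleftrightarrow> continuous_on UNIV \<rho> \<and>
     (\<forall>g. bij (blinfun_apply (\<rho> g))) \<and>
     (\<forall>g h. \<rho> (g \<otimes>\<^bsub>G\<^esub> h) = \<rho> g o\<^sub>L \<rho> h) \<and>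
     \<rho> \<one>\<^bsub>G\<^esub> = id_blinfun"

definition equivariant_cond_dist ::
  "'g monoid \<Rightarrow> ('g::topological_space \<Rightarrow> ('x::real_normed_vector \<Rightarrow>\<^sub>L 'x)) \<Rightarrow> ('x \<Rightarrow> 'g measure) \<Rightarrow> bool" where
  "equivariant_cond_dist G \<rho>1 P \<longleftrightarrow>
     (\<forall>x. prob_space (P x) \<and> sets (P x) = sets borel) \<and>
     (\<forall>x g'. distr (P x) borel (\<lambda>g. g' \<otimes>\<^bsub>G\<^esub> g) = P (blinfun_apply (\<rho>1 g') x))"

definition universal_approximator ::
  "('p \<Rightarrow> 'x::real_normed_vector \<Rightarrow> 'y::real_normed_vector) \<Rightarrow> (('x \<Rightarrow> 'y) \<Rightarrow> bool) \<Rightarrow> bool" where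
  "universal_approximator f C \<longleftrightarrow>
     (\<forall>\<psi> K \<epsilon>. continuous_on UNIV \<psi> \<and> C \<psi> \<and> compact K \<and> \<epsilon> > 0 \<longrightarrow>
        (\<exists>\<theta>. \<forall>x\<in>K. norm (\<psi> x - f \<theta> x) \<le> \<epsilon>))"

definition equivariant_fun ::
  "('g \<Rightarrow> ('x::real_normed_vector \<Rightarrow>\<^sub>L 'x)) \<Rightarrow> ('g \<Rightarrow> ('y::real_normed_vector \<Rightarrow>\<^sub>L 'y)) \<Rightarrow> ('x \<Rightarrow> 'y) \<Rightarrow> bool" where
  "equivariant_fun \<rho>1 \<rho>2 \<psi> \<longleftrightarrow> (\<forall>g x. \<psi> (blinfun_apply (\<rho>1 g) x) = blinfun_apply (\<rho>2 g) (\<psi> x))"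

definition sym_fun ::
  "('g::topological_space \<Rightarrow> ('x::real_normed_vector \<Rightarrow>\<^sub>L 'x)) \<Rightarrow> ('g \<Rightarrow> ('y::{banach,second_countable_topology} \<Rightarrow>\<^sub>L 'y))
    \<Rightarrow> ('x \<Rightarrow> 'g measure) \<Rightarrow> ('x \<Rightarrow> 'y) \<Rightarrow> 'x \<Rightarrow> 'y" where
  "sym_fun \<rho>1 \<rho>2 P h x = (LINT g|P x. blinfun_apply (\<rho>2 g) (h (Hilbert_Choice.inv (blinfun_apply (\<rho>1 g)) x)))"

end

theory Submission
  imports Defs
begin

text \<open>Since every group element acts by a bounded operator and \<open>G\<close> is compact, the operators
  \<open>\<rho>\<^sub>2 g\<close> are uniformly bounded by some \<open>M\<close>. Equivariance gives
  \<open>\<psi> x = \<rho>\<^sub>2 g (\<psi> (\<rho>\<^sub>1 g\<inverse> x))\<close> for every \<open>g\<close>, so \<open>\<psi>\<close> equals its own symmetrisation. Hence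
  \<open>\<psi> x - \<phi>\<^sub>\<theta>(x)\<close> is the average over \<open>g\<close> of \<open>\<rho>\<^sub>2 g (\<psi> - f\<^sub>\<theta>)(\<rho>\<^sub>1 g\<inverse> x)\<close>, which has norm at most
  \<open>\<epsilon>\<close> as soon as \<open>f\<^sub>\<theta>\<close> approximates \<open>\<psi>\<close> within \<open>\<epsilon>/M\<close> on the compact set
  \<open>{\<rho>\<^sub>1 g\<inverse> x | g \<in> G, x \<in> K}\<close>.\<close>

lemma (in prob_space) norm_integral_le_const:
  fixes u :: "'a \<Rightarrow> 'b::{banach,second_countable_topology}"
  assumes "integrable M u" and "\<And>g. g \<in> space M \<Longrightarrow> norm (u g) \<le> B"
  shows "norm (LINT g|M. u g) \<le> B"
proof -
  have "norm (LINT g|M. u g) \<le> (LINT g|M. norm (u g))"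
    by (rule integral_norm_bound)
  also have "\<dots> \<le> B"
    using assms by (intro integral_le_const integrable_norm) auto
  finally show ?thesis .
qed

lemma integrable_continuous_on_compact_space:
  fixes u :: "'a::topological_space \<Rightarrow> 'b::{banach,second_countable_topology}"
  assumes "finite_measure M" and "sets M = sets borel"
    and "compact (UNIV :: 'a set)" and "continuous_on UNIV u"
  shows "integrable M u"
proof -
  obtain B where "\<And>g. norm (u g) \<le> B"
    using compact_imp_bounded[OF compact_continuous_image[OF assms(4,3)]]
    by (auto simp: bounded_iff)
  moreover have "u \<in> borel_measurable M"
    using borel_measurable_continuous_onI[OF assms(4)] measurable_cong_sets[OF assms(2) refl]
    by blast
  ultimately show ?thesis
    by (intro finite_measure.integrable_const_bound[OF assms(1)]) auto
qed

lemma continuous_rep_apply_inv: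
  assumes "group G" and "continuous_rep G \<rho>" and "g \<in> carrier G"
  shows "\<rho> g (\<rho> (inv\<^bsub>G\<^esub> g) x) = x"
proof -
  have "\<rho> g o\<^sub>L \<rho> (inv\<^bsub>G\<^esub> g) = id_blinfun"
    using assms group.r_inv[OF assms(1)] unfolding continuous_rep_def by metis
  then show ?thesis
    by (metis blinfun_apply_blinfun_compose id_blinfun.rep_eq id_apply)
qed

lemma inv_continuous_rep_apply:
  assumes "group G" and "continuous_rep G \<rho>" and "g \<in> carrier G"
  shows "Hilbert_Choice.inv (\<rho> g) = \<rho> (inv\<^bsub>G\<^esub> g)"
proof -
  have "bij (\<rho> g)"
    using assms(2) unfolding continuous_rep_def by blast
  then show ?thesis
    using continuous_rep_apply_inv[OF assms] by (metis bij_is_inj inv_f_f ext)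
qed

lemma sym_fun_eq_integral_rep_inv:
  assumes "compact_group G" and "continuous_rep G \<rho>1"
  shows "sym_fun \<rho>1 \<rho>2 P h x = (LINT g|P x. \<rho>2 g (h (\<rho>1 (inv\<^bsub>G\<^esub> g) x)))"
proof -
  have "group G" and "carrier G = UNIV"
    using assms(1) unfolding compact_group_def by auto
  then show ?thesis
    unfolding sym_fun_def by (simp add: inv_continuous_rep_apply[OF _ assms(2)])
qed

lemma continuous_on_rep_inv_apply:
  assumes "compact_group G" and "continuous_rep G \<rho>"
  shows "continuous_on UNIV (\<lambda>(g, x). \<rho> (inv\<^bsub>G\<^esub> g) x)"
proof -
  have \<rho>: "continuous_on UNIV \<rho>" and inv: "continuous_on UNIV (\<lambda>g. inv\<^bsub>G\<^esub> g)"
    using assms unfolding continuous_rep_def compact_group_def by auto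
  have "continuous_on UNIV (\<lambda>p. \<rho> (inv\<^bsub>G\<^esub> (fst p)))"
    by (rule continuous_on_compose2[OF \<rho> continuous_on_compose2[OF inv continuous_on_fst]]) auto
  then show ?thesis
    unfolding case_prod_beta
    by (intro bounded_bilinear.continuous_on[OF bounded_bilinear_blinfun_apply] continuous_on_snd)
      auto
qed

lemma equivariant_fun_rep_inv:
  assumes "equivariant_fun \<rho>1 \<rho>2 \<psi>" and "group G" and "continuous_rep G \<rho>1"
    and "g \<in> carrier G"
  shows "\<rho>2 g (\<psi> (\<rho>1 (inv\<^bsub>G\<^esub> g) x)) = \<psi> x"
  using assms continuous_rep_apply_inv unfolding equivariant_fun_def by metis

lemma norm_diff_sym_fun_le:
  fixes \<rho>1 :: "'g::t2_space \<Rightarrow> ('x::real_normed_vector \<Rightarrow>\<^sub>L 'x)"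
    and \<rho>2 :: "'g \<Rightarrow> ('y::{banach,second_countable_topology} \<Rightarrow>\<^sub>L 'y)"
  assumes G: "compact_group G" and \<rho>1: "continuous_rep G \<rho>1" and \<rho>2: "continuous_rep G \<rho>2"
    and P: "prob_space (P x)" "sets (P x) = sets borel"
    and \<psi>: "equivariant_fun \<rho>1 \<rho>2 \<psi>" "continuous_on UNIV \<psi>"
    and h: "continuous_on UNIV h"
    and M: "\<And>g. norm (\<rho>2 g) \<le> M"
    and close: "\<And>g. norm (\<psi> (\<rho>1 (inv\<^bsub>G\<^esub> g) x) - h (\<rho>1 (inv\<^bsub>G\<^esub> g) x)) \<le> \<delta>"
  shows "norm (\<psi> x - sym_fun \<rho>1 \<rho>2 P h x) \<le> M * \<delta>"
proof -
  interpret prob_space "P x" by (rule P(1))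
  have grp: "group G" and UNIV: "carrier G = UNIV" and cpt: "compact (UNIV :: 'g set)"
    using G unfolding compact_group_def by auto
  define avg where "avg k g = \<rho>2 g (k (\<rho>1 (inv\<^bsub>G\<^esub> g) x))" for k :: "'x \<Rightarrow> 'y" and g
  have integrable_avg: "integrable (P x) (avg k)" if "continuous_on UNIV k" for k
  proof -
    have "continuous_on UNIV ((\<lambda>(g, x). \<rho>1 (inv\<^bsub>G\<^esub> g) x) \<circ> (\<lambda>g. (g, x)))"
      by (intro continuous_on_compose continuous_on_subset[OF continuous_on_rep_inv_apply[OF G \<rho>1]])
        (auto intro!: continuous_intros)
    then have "continuous_on UNIV (\<lambda>g. \<rho>1 (inv\<^bsub>G\<^esub> g) x)"
      by (simp add: o_def)
    then have "continuous_on UNIV (avg k)"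
      unfolding avg_def using \<rho>2 that unfolding continuous_rep_def
      by (intro bounded_bilinear.continuous_on[OF bounded_bilinear_blinfun_apply])
        (auto intro: continuous_on_compose2)
    then show ?thesis
      using finite_measure_axioms P(2) cpt by (rule_tac integrable_continuous_on_compact_space) auto
  qed
  have "\<psi> x - sym_fun \<rho>1 \<rho>2 P h x = (LINT g|P x. avg \<psi> g) - (LINT g|P x. avg h g)"
    using equivariant_fun_rep_inv[OF \<psi>(1) grp \<rho>1] UNIV prob_space
    by (simp add: avg_def sym_fun_eq_integral_rep_inv[OF G \<rho>1])
  also have "\<dots> = (LINT g|P x. avg \<psi> g - avg h g)"
    using integrable_avg[OF \<psi>(2)] integrable_avg[OF h]
    by (rule Bochner_Integration.integral_diff[symmetric])
  also have "norm \<dots> \<le> M * \<delta>"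
  proof (rule norm_integral_le_const)
    show "integrable (P x) (\<lambda>g. avg \<psi> g - avg h g)"
      using integrable_avg[OF \<psi>(2)] integrable_avg[OF h] by simp
    show "norm (avg \<psi> g - avg h g) \<le> M * \<delta>" for g
    proof -
      have "norm (avg \<psi> g - avg h g) \<le> norm (\<rho>2 g) * \<delta>"
        unfolding avg_def blinfun.diff_right[symmetric]
        using norm_blinfun close by (meson mult_left_mono norm_ge_zero order_trans)
      also have "\<dots> \<le> M * \<delta>"
        using M close by (meson mult_right_mono norm_ge_zero order_trans)
      finally show ?thesis .
    qed
  qed
  finally show ?thesis .
qed

theorem theorem2:
  fixes G :: "('g::t2_space) monoid"
    and \<rho>1 :: "'g \<Rightarrow> ('x::real_normed_vector \<Rightarrow>\<^sub>L 'x)"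
    and \<rho>2 :: "'g \<Rightarrow> ('y::{banach,second_countable_topology} \<Rightarrow>\<^sub>L 'y)"
    and P :: "'x \<Rightarrow> 'g measure"
    and f :: "'p \<Rightarrow> 'x \<Rightarrow> 'y"
  assumes "compact_group G"
    and "fin_dim_space TYPE('x)" and "fin_dim_space TYPE('y)"
    and "continuous_rep G \<rho>1" and "continuous_rep G \<rho>2"
    and "equivariant_cond_dist G \<rho>1 P"
    and "\<forall>\<theta>. continuous_on UNIV (f \<theta>)"
    and "universal_approximator f (\<lambda>_. True)"
  shows "universal_approximator (\<lambda>\<theta>. sym_fun \<rho>1 \<rho>2 P (f \<theta>)) (equivariant_fun \<rho>1 \<rho>2)"
  unfolding universal_approximator_def
proof (intro allI impI)
  fix \<psi> :: "'x \<Rightarrow> 'y" and K :: "'x set" and \<epsilon> :: real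
  assume \<psi>: "continuous_on UNIV \<psi> \<and> equivariant_fun \<rho>1 \<rho>2 \<psi> \<and> compact K \<and> \<epsilon> > 0"
  have cpt: "compact (UNIV :: 'g set)"
    using assms(1) unfolding compact_group_def by blast
  have "bounded (range \<rho>2)"
    using assms(5) cpt unfolding continuous_rep_def
    by (intro compact_imp_bounded compact_continuous_image) auto
  then obtain M where M: "M > 0" "\<And>g. norm (\<rho>2 g) \<le> M"
    unfolding bounded_pos by auto
  define K' where "K' = (\<lambda>(g, x). \<rho>1 (inv\<^bsub>G\<^esub> g) x) ` (UNIV \<times> K)"
  have "compact K'"
    unfolding K'_def using \<psi> cpt continuous_on_rep_inv_apply[OF assms(1,4)]
    by (intro compact_continuous_image compact_Times) (auto intro: continuous_on_subset)
  then obtain \<theta> where \<theta>: "\<forall>y\<in>K'. norm (\<psi> y - f \<theta> y) \<le> \<epsilon> / M"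
    using assms(8) \<psi> M(1) divide_pos_pos[of \<epsilon> M] unfolding universal_approximator_def by blast
  have "norm (\<psi> x - sym_fun \<rho>1 \<rho>2 P (f \<theta>) x) \<le> M * (\<epsilon> / M)" if "x \<in> K" for x
    using assms(6) that \<theta> \<psi> assms(7) M(2) unfolding equivariant_cond_dist_def K'_def
    by (intro norm_diff_sym_fun_le[OF assms(1,4,5)]) auto
  then show "\<exists>\<theta>. \<forall>x\<in>K. norm (\<psi> x - sym_fun \<rho>1 \<rho>2 P (f \<theta>) x) \<le> \<epsilon>"
    using M(1) by auto
qed

end
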